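(* Let $t$ be a positive integer, $s\ge 2$, and let $G=K(n_1,\dots,n_s)$ be a complete $s$-partite graph with $n_1\ge n_2\ge\cdots\ge n_s\ge 1$. If $n_1\ge 2t$ then $\beta_t(G)=n_1$, and if $n_1\le 2t$ then $\beta_t(G)\le 2t$.
   Context: $K(n_1,\dots,n_s)$ denotes the complete $s$-partite graph whose parts have $n_1,\dots,n_s$ vertices. A set $S\subseteq V(G)$ is $t$-sparse if the induced subgraph $G[S]$ has maximum degree at most $t$; $\beta_t(G)$ is the maximum size of a $t$-sparse set of $G$. *)

theory Defs
  imports Main
begin

(* A simple graph is given by a vertex set V and a symmetric irreflexive adjacency E. *)

definition degree_in :: "('a \<Rightarrow> 'a \<Rightarrow> bool) \<Rightarrow> 'a set \<Rightarrow> 'a \<Rightarrow> nat" where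
  "degree_in E S v = card {u \<in> S. E v u}"

definition t_sparse :: "'a set \<Rightarrow> ('a \<Rightarrow> 'a \<Rightarrow> bool) \<Rightarrow> nat \<Rightarrow> 'a set \<Rightarrow> bool" where
  "t_sparse V E t S \<longleftrightarrow> S \<subseteq> V \<and> (\<forall>v\<in>S. degree_in E S v \<le> t)"

(* beta_t(G): maximum size of a t-sparse set (V finite) *)
definition beta :: "'a set \<Rightarrow> ('a \<Rightarrow> 'a \<Rightarrow> bool) \<Rightarrow> nat \<Rightarrow> nat" where
  "beta V E t = Max (card ` {S. t_sparse V E t S})"

(* Complete s-partite graph K(n_0,...,n_{s-1}): vertex (i,j) is the j-th vertex of part i *)
definition kpart_vertices :: "nat \<Rightarrow> (nat \<Rightarrow> nat) \<Rightarrow> (nat \<times> nat) set" where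
  "kpart_vertices s n = {(i, j). i < s \<and> j < n i}"

definition kpart_adj :: "(nat \<times> nat) \<Rightarrow> (nat \<times> nat) \<Rightarrow> bool" where
  "kpart_adj u v \<longleftrightarrow> fst u \<noteq> fst v"

end

theory Submission
  imports Defs
begin

(* A single part of K(n_1,...,n_s) is independent, so beta_t >= n_1. Conversely, if a t-sparse
   set S contains vertices u, v from different parts, then every vertex of S is adjacent to u or
   to v, so |S| <= deg_S u + deg_S v <= 2t; otherwise S lies inside one part and |S| <= n_1. *)

lemma finite_t_sparse_cards:
  assumes "finite V"
  shows "finite (card ` {S. t_sparse V E t S})"
proof -
  have "{S. t_sparse V E t S} \<subseteq> Pow V" by (auto simp: t_sparse_def)
  then show ?thesis using assms by (meson finite_Pow_iff finite_imageI finite_subset)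
qed

lemma card_le_beta:
  assumes "finite V" and "t_sparse V E t S"
  shows "card S \<le> beta V E t"
  unfolding beta_def using assms(2) by (intro Max_ge finite_t_sparse_cards assms(1)) simp

lemma beta_le:
  assumes "finite V" and "\<And>S. t_sparse V E t S \<Longrightarrow> card S \<le> b"
  shows "beta V E t \<le> b"
proof -
  have "t_sparse V E t {}" by (simp add: t_sparse_def)
  then have "card ` {S. t_sparse V E t S} \<noteq> {}" by blast
  then show ?thesis
    unfolding beta_def using assms by (simp add: finite_t_sparse_cards)
qed

lemma kpart_vertices_eq_Sigma: "kpart_vertices s n = (SIGMA i:{..<s}. {..<n i})"
  by (auto simp: kpart_vertices_def)

lemma finite_kpart_vertices: "finite (kpart_vertices s n)"
  by (simp add: kpart_vertices_eq_Sigma)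

lemma degree_in_kpart_adj: "degree_in kpart_adj S u = card {w \<in> S. fst u \<noteq> fst w}"
  by (simp add: degree_in_def kpart_adj_def)

lemma t_sparse_kpart_part:
  assumes "i < s"
  shows "t_sparse (kpart_vertices s n) kpart_adj t ({i} \<times> {..<n i})"
proof -
  have no_edges: "{w \<in> {i} \<times> {..<n i}. i \<noteq> fst w} = {}" by auto
  show ?thesis
    using assms by (auto simp: t_sparse_def kpart_vertices_def degree_in_kpart_adj no_edges)
qed

lemma card_kpart_le_two_parts:
  assumes "finite S" and "\<forall>w\<in>S. degree_in kpart_adj S w \<le> t"
    and "u \<in> S" and "v \<in> S" and "fst u \<noteq> fst v"
  shows "card S \<le> 2 * t"
proof -
  have "S \<subseteq> {w \<in> S. fst u \<noteq> fst w} \<union> {w \<in> S. fst v \<noteq> fst w}"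
    using assms(5) by auto
  then have "card S \<le> card ({w \<in> S. fst u \<noteq> fst w} \<union> {w \<in> S. fst v \<noteq> fst w})"
    using assms(1) by (intro card_mono) auto
  also have "\<dots> \<le> card {w \<in> S. fst u \<noteq> fst w} + card {w \<in> S. fst v \<noteq> fst w}"
    by (rule card_Un_le)
  also have "\<dots> \<le> t + t"
    using assms(2-4) by (intro add_mono) (simp_all add: degree_in_kpart_adj)
  finally show ?thesis by simp
qed

lemma card_kpart_le_one_part:
  assumes "S \<subseteq> kpart_vertices s n" and "\<forall>w\<in>S. fst w = i"
  shows "card S \<le> n i"
proof -
  have "S \<subseteq> {i} \<times> {..<n i}"
    using assms by (force simp: kpart_vertices_def)
  then have "card S \<le> card ({i} \<times> {..<n i})" by (intro card_mono) auto
  then show ?thesis by (simp add: card_cartesian_product)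
qed

lemma card_t_sparse_kpart_le:
  assumes mono: "\<And>i j. i \<le> j \<Longrightarrow> j < s \<Longrightarrow> n j \<le> n i"
    and sparse: "t_sparse (kpart_vertices s n) kpart_adj t S"
  shows "card S \<le> max (n 0) (2 * t)"
proof -
  have S_sub: "S \<subseteq> kpart_vertices s n" and deg: "\<forall>w\<in>S. degree_in kpart_adj S w \<le> t"
    using sparse by (auto simp: t_sparse_def)
  have "finite S" using S_sub finite_kpart_vertices by (rule finite_subset)
  consider (two_parts) u v where "u \<in> S" "v \<in> S" "fst u \<noteq> fst v"
    | (empty) "S = {}"
    | (one_part) u where "u \<in> S" "\<forall>w\<in>S. fst w = fst u"
    by blast
  then show ?thesis
  proof cases
    case two_parts
    with \<open>finite S\<close> deg have "card S \<le> 2 * t" by (intro card_kpart_le_two_parts)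
    then show ?thesis by simp
  next
    case empty
    then show ?thesis by simp
  next
    case one_part
    have "fst u < s" using S_sub one_part(1) by (auto simp: kpart_vertices_def)
    then have "n (fst u) \<le> n 0" using mono by simp
    with card_kpart_le_one_part[OF S_sub one_part(2)] show ?thesis by simp
  qed
qed

theorem corollary2p2:
  fixes s t :: nat and n :: "nat \<Rightarrow> nat"
  assumes "t \<ge> 1" and "s \<ge> 2"
    and "\<And>i j. i \<le> j \<Longrightarrow> j < s \<Longrightarrow> n j \<le> n i"
    and "\<And>i. i < s \<Longrightarrow> n i \<ge> 1"
  shows "(n 0 \<ge> 2 * t \<longrightarrow> beta (kpart_vertices s n) kpart_adj t = n 0)
       \<and> (n 0 \<le> 2 * t \<longrightarrow> beta (kpart_vertices s n) kpart_adj t \<le> 2 * t)"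
proof -
  let ?\<beta> = "beta (kpart_vertices s n) kpart_adj t"
  have "t_sparse (kpart_vertices s n) kpart_adj t ({0} \<times> {..<n 0})"
    using assms(2) by (simp add: t_sparse_kpart_part)
  then have "n 0 \<le> ?\<beta>"
    using card_le_beta[OF finite_kpart_vertices] by (fastforce simp: card_cartesian_product)
  moreover have "?\<beta> \<le> max (n 0) (2 * t)"
    by (rule beta_le[OF finite_kpart_vertices]) (rule card_t_sparse_kpart_le[OF assms(3)])
  ultimately show ?thesis by auto
qed

end
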